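(* Let $\tfrac12 H_{24}$ denote the halved $24$-cube (defined below). For each integer $c\in\{3,6,8,9,11,12\}\cup\{14,15,16,\dots,128\}$ there exists a set $C\subset V(\tfrac12 H_{24})$ whose characteristic function $\chi_C$ is a perfect coloring of $\tfrac12 H_{24}$ with parameters $((20+c,\,256-c)(c,\,276-c))$.
   Context: $E^n$ is the set of binary words of length $n$; the (Hamming) distance between two words is the number of positions where they differ, and the weight of a word is its number of ones. The halved $24$-cube $\tfrac12 H_{24}$ is the graph whose vertices are the even-weight words of $E^{24}$, two of them adjacent iff they are at Hamming distance exactly $2$ (it is regular of degree $276$; the analogous graph on odd-weight words is isomorphic to it). For a graph $G$ and a set $C$ with $\emptyset\neq C\subsetneq V(G)$, the characteristic function $\chi_C$ is a perfect coloring with parameters $((a,b)(c,d))$ if every vertex of $C$ has exactly $a$ neighbours in $C$ and exactly $b$ neighbours outside $C$, and every vertex outside $C$ has exactly $c$ neighbours in $C$ and exactly $d$ neighbours outside $C$. *)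

theory Defs
  imports Main
begin

definition weight :: "bool list \<Rightarrow> nat" where
  "weight w = length (filter id w)"

definition hamming :: "bool list \<Rightarrow> bool list \<Rightarrow> nat" where
  "hamming u v = length (filter (\<lambda>(a, b). a \<noteq> b) (zip u v))"

definition halved_cube_vertices :: "nat \<Rightarrow> bool list set" where
  "halved_cube_vertices n = {w. length w = n \<and> even (weight w)}"

definition halved_cube_adj :: "bool list \<Rightarrow> bool list \<Rightarrow> bool" where
  "halved_cube_adj u v \<longleftrightarrow> hamming u v = 2"

definition perfect_coloring_params ::
  "'v set \<Rightarrow> ('v \<Rightarrow> 'v \<Rightarrow> bool) \<Rightarrow> 'v set \<Rightarrow> nat \<Rightarrow> nat \<Rightarrow> nat \<Rightarrow> nat \<Rightarrow> bool" where
  "perfect_coloring_params V adj C a b c d \<longleftrightarrow>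
     C \<noteq> {} \<and> C \<subset> V \<and>
     (\<forall>x\<in>C. card {y\<in>V. adj x y \<and> y \<in> C} = a \<and> card {y\<in>V. adj x y \<and> y \<notin> C} = b) \<and>
     (\<forall>x\<in>V - C. card {y\<in>V. adj x y \<and> y \<in> C} = c \<and> card {y\<in>V. adj x y \<and> y \<notin> C} = d)"

end

theory Submission
  imports Defs
begin

text \<open>
  Identify a binary word with its
  support and write \<open>\<oplus>\<close> for symmetric difference.  Let \<open>col 0, \<dots>, col 23\<close> be the columns of a
  parity-check matrix \<open>(B | I)\<close> of the extended Golay code; the syndrome of a word is the
  \<open>\<oplus>\<close>-sum of the columns on its support.  Neighbours in the halved 24-cube arise by flipping two
  coordinates \<open>i < j\<close>, which adds \<open>col i \<oplus> col j\<close> to the syndrome.  So the preimage of a set \<open>S\<close>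
  of syndromes is a perfect colouring with parameters \<open>((c+20, 256-c), (c, 276-c))\<close> once \<open>S\<close> is
  equitable: each even syndrome \<open>s\<close> has exactly \<open>c + 20\<cdot>[s \<in> S]\<close> shifts \<open>s \<oplus> col i \<oplus> col j\<close> in
  \<open>S\<close>.  Disjoint equitable sets add up.  Building blocks: translates \<open>{s\<^sub>0 \<oplus> col k}\<close> by an odd
  syndrome (\<open>c = 3\<close>, since the 1- and 3-subsets of coordinates are exactly the coset leaders of
  the odd syndromes) and classes of a 5-bit parity map (\<open>c = 8\<close>).  Seven pairwise disjoint
  translates, fifteen classes avoiding them and one further class give every \<open>c = 3a + 8b\<close> of the
  theorem.
\<close>

text \<open>Symmetric difference is addition of characteristic vectors over the two-element field.\<close>

definition symdiff :: "'a set \<Rightarrow> 'a set \<Rightarrow> 'a set" (infixl "\<oplus>" 65) where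
  "A \<oplus> B = (A - B) \<union> (B - A)"

lemma symdiff_cancel_left [simp]: "A \<oplus> (A \<oplus> B) = B"
  by (auto simp: symdiff_def)

lemma symdiff_cancel_right [simp]: "B \<oplus> A \<oplus> A = B"
  by (auto simp: symdiff_def)

lemma symdiff_empty_iff: "A \<oplus> B = {} \<longleftrightarrow> A = B"
  by (auto simp: symdiff_def)

lemma finite_symdiff [simp]: "finite A \<Longrightarrow> finite B \<Longrightarrow> finite (A \<oplus> B)"
  by (simp add: symdiff_def)

lemma odd_card_symdiff:
  assumes "finite A" "finite B"
  shows "odd (card (A \<oplus> B)) \<longleftrightarrow> odd (card A) \<noteq> odd (card B)"
proof -
  have "A \<oplus> B = (A \<union> B) - (A \<inter> B)"
    by (auto simp: symdiff_def)
  then have "card (A \<oplus> B) = card (A \<union> B) - card (A \<inter> B)"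
    using assms by (simp add: card_Diff_subset Int_lower1 le_supI1)
  moreover have "card (A \<inter> B) \<le> card (A \<union> B)"
    using assms by (intro card_mono) auto
  moreover have "card A + card B = card (A \<union> B) + card (A \<inter> B)"
    using assms by (rule card_Un_Int)
  ultimately show ?thesis
    by presburger
qed

interpretation Xor: comm_monoid_set "(\<oplus>) :: 'a set \<Rightarrow> 'a set \<Rightarrow> 'a set" "{}"
  by unfold_locales (auto simp: symdiff_def)

lemma Xor_symdiff:
  assumes "finite A" "finite B"
  shows "Xor.F g (A \<oplus> B) = Xor.F g A \<oplus> Xor.F g B"
proof -
  have split: "Xor.F g X = Xor.F g (X - Y) \<oplus> Xor.F g (X \<inter> Y)" if "finite X" for X Y
    using Xor.union_disjoint[of "X - Y" "X \<inter> Y" g] that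
    by (simp add: Un_Diff_Int Diff_Int_distrib2 inf_commute)
  have "Xor.F g (A \<oplus> B) = Xor.F g (A - B) \<oplus> Xor.F g (B - A)"
    using Xor.union_disjoint[of "A - B" "B - A" g] assms by (auto simp: symdiff_def[of A B])
  then show ?thesis
    using split[of A B] split[of B A] assms by (auto simp: symdiff_def Int_commute)
qed

definition supp :: "bool list \<Rightarrow> nat set" where
  "supp x = {i. i < length x \<and> x ! i}"

lemma finite_supp [simp]: "finite (supp x)"
  by (simp add: supp_def)

lemma supp_subset: "supp x \<subseteq> {..<length x}"
  by (auto simp: supp_def)

lemma weight_eq_card_supp: "weight x = card (supp x)"
  unfolding weight_def supp_def by (simp add: length_filter_conv_card)

lemma supp_inject: "length x = length y \<Longrightarrow> supp x = supp y \<Longrightarrow> x = y"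
  by (auto simp: supp_def list_eq_iff_nth_eq set_eq_iff)

lemma hamming_eq_card_supp:
  assumes "length x = length y"
  shows "hamming x y = card (supp x \<oplus> supp y)"
proof -
  have "hamming x y = card {k. k < length x \<and> x ! k \<noteq> y ! k}"
    using assms unfolding hamming_def
    by (simp add: length_filter_conv_card) (rule arg_cong[where f = card], auto simp: nth_zip)
  also have "{k. k < length x \<and> x ! k \<noteq> y ! k} = supp x \<oplus> supp y"
    using assms by (auto simp: supp_def symdiff_def)
  finally show ?thesis .
qed

definition flip2 :: "bool list \<Rightarrow> nat \<Rightarrow> nat \<Rightarrow> bool list" where
  "flip2 x i j = x[i := \<not> x ! i, j := \<not> x ! j]"

lemma length_flip2 [simp]: "length (flip2 x i j) = length x"
  by (simp add: flip2_def)

lemma supp_flip2: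
  assumes "i \<noteq> j" "i < length x" "j < length x"
  shows "supp (flip2 x i j) = supp x \<oplus> {i, j}"
  using assms by (auto simp: supp_def symdiff_def flip2_def nth_list_update)

definition pairs :: "nat \<Rightarrow> (nat \<times> nat) set" where
  "pairs n = {(i, j). i < j \<and> j < n}"

lemma finite_pairs [simp]: "finite (pairs n)"
  by (rule finite_subset[of _ "{..<n} \<times> {..<n}"]) (auto simp: pairs_def)

lemma flip2_neighbour:
  assumes x: "x \<in> halved_cube_vertices n" and ij: "(i, j) \<in> pairs n"
  shows "flip2 x i j \<in> halved_cube_vertices n \<and> halved_cube_adj x (flip2 x i j)"
proof -
  have len: "length x = n" and ev: "even (card (supp x))"
    using x by (auto simp: halved_cube_vertices_def weight_eq_card_supp)
  have flipped: "supp (flip2 x i j) = supp x \<oplus> {i, j}"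
    using ij len by (intro supp_flip2) (auto simp: pairs_def)
  have "i \<noteq> j" using ij by (simp add: pairs_def)
  then have "even (card (supp (flip2 x i j)))"
    using ev odd_card_symdiff[of "supp x" "{i, j}"] by (simp add: flipped)
  moreover have "card (supp x \<oplus> supp (flip2 x i j)) = 2"
    using \<open>i \<noteq> j\<close> by (simp add: flipped)
  ultimately show ?thesis
    using len by (simp add: halved_cube_vertices_def halved_cube_adj_def weight_eq_card_supp
        hamming_eq_card_supp)
qed

lemma neighbour_is_flip2:
  assumes x: "x \<in> halved_cube_vertices n" and y: "y \<in> halved_cube_vertices n"
    and adj: "halved_cube_adj x y"
  obtains i j where "(i, j) \<in> pairs n" "y = flip2 x i j"
proof -
  have len: "length x = n" "length y = n"
    using x y by (auto simp: halved_cube_vertices_def)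
  then have "card (supp x \<oplus> supp y) = 2"
    using adj by (simp add: halved_cube_adj_def hamming_eq_card_supp)
  then obtain u v where uv: "supp x \<oplus> supp y = {u, v}" "u \<noteq> v"
    by (auto simp: card_2_iff)
  define a b where "a = min u v" and "b = max u v"
  have ab: "supp x \<oplus> supp y = {a, b}" "a < b"
    using uv by (auto simp: a_def b_def min_def max_def)
  have "b < n"
    using ab(1) len supp_subset[of x] supp_subset[of y] by (auto simp: symdiff_def)
  have "supp y = supp (flip2 x a b)"
    using ab \<open>b < n\<close> len by (simp add: supp_flip2 flip: ab(1))
  then have "y = flip2 x a b"
    using len by (intro supp_inject) simp_all
  then show thesis
    using that ab(2) \<open>b < n\<close> by (simp add: pairs_def)
qed

lemma inj_on_flip2:
  assumes "length x = n"
  shows "inj_on (\<lambda>(i, j). flip2 x i j) (pairs n)"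
proof (rule inj_onI, clarsimp simp: pairs_def)
  fix a b c d
  assume "a < b" "b < n" "c < d" "d < n" "flip2 x a b = flip2 x c d"
  then have "supp x \<oplus> {a, b} = supp x \<oplus> {c, d}"
    using assms supp_flip2[of a b x] supp_flip2[of c d x] by simp
  then have "{a, b} = {c, d}"
    by (metis symdiff_cancel_left)
  then show "a = c \<and> b = d"
    using \<open>a < b\<close> \<open>c < d\<close> by (auto simp: doubleton_eq_iff)
qed

lemma card_neighbours:
  assumes x: "x \<in> halved_cube_vertices n"
  shows "card {y \<in> halved_cube_vertices n. halved_cube_adj x y \<and> P y}
       = card {(i, j) \<in> pairs n. P (flip2 x i j)}"
proof -
  have "{y \<in> halved_cube_vertices n. halved_cube_adj x y \<and> P y}
      = (\<lambda>(i, j). flip2 x i j) ` {(i, j) \<in> pairs n. P (flip2 x i j)}" (is "?N = ?F ` ?Q")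
  proof
    show "?N \<subseteq> ?F ` ?Q"
    proof
      fix y assume y: "y \<in> ?N"
      then obtain i j where "(i, j) \<in> pairs n" "y = flip2 x i j"
        using neighbour_is_flip2[OF x] by blast
      then show "y \<in> ?F ` ?Q"
        using y by force
    qed
    show "?F ` ?Q \<subseteq> ?N"
      using flip2_neighbour[OF x] by auto
  qed
  moreover have "inj_on (\<lambda>(i, j). flip2 x i j) {(i, j) \<in> pairs n. P (flip2 x i j)}"
    using x by (auto simp: halved_cube_vertices_def intro: inj_on_subset[OF inj_on_flip2])
  ultimately show ?thesis
    by (simp add: card_image)
qed

lemma card_neighbours_compl:
  assumes x: "x \<in> halved_cube_vertices n"
  shows "card {y \<in> halved_cube_vertices n. halved_cube_adj x y \<and> \<not> P y}
       = card (pairs n) - card {(i, j) \<in> pairs n. P (flip2 x i j)}"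
proof -
  define Q where "Q = {(i, j) \<in> pairs n. P (flip2 x i j)}"
  have "{(i, j) \<in> pairs n. \<not> P (flip2 x i j)} = pairs n - Q"
    by (auto simp: Q_def)
  moreover have "card (pairs n - Q) = card (pairs n) - card Q"
    by (rule card_Diff_subset) (auto simp: Q_def intro: finite_subset[OF _ finite_pairs])
  ultimately show ?thesis
    using card_neighbours[OF x, of "\<lambda>y. \<not> P y"] by (simp add: Q_def)
qed

text \<open>An explicit enumeration of the coordinate pairs, so that counts over them can be evaluated.\<close>

definition pair_list :: "nat \<Rightarrow> (nat \<times> nat) list" where
  "pair_list n = concat (map (\<lambda>j. map (\<lambda>i. (i, j)) [0..<j]) [0..<n])"

lemma set_pair_list: "set (pair_list n) = pairs n"
  by (fastforce simp: pair_list_def pairs_def image_iff)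

lemma card_pairs_filter: "card {p \<in> pairs n. P p} = length (filter P (pair_list n))"
proof -
  have "distinct (pair_list n)"
    by (induction n) (auto simp: pair_list_def distinct_map inj_on_def)
  moreover have "{p \<in> pairs n. P p} = set (filter P (pair_list n))"
    by (simp add: set_pair_list)
  ultimately show ?thesis
    by (metis distinct_card distinct_filter)
qed

text \<open>Syndromes are subsets of \<open>{..<m}\<close>; those of even-weight words have even size.\<close>

definition even_subsets :: "nat \<Rightarrow> nat set set" where
  "even_subsets m = {s. s \<subseteq> {..<m} \<and> even (card s)}"

definition odd_subsets :: "nat \<Rightarrow> nat set set" where
  "odd_subsets m = {s. s \<subseteq> {..<m} \<and> odd (card s)}"

text \<open>The 1- and 3-subsets of the coordinates, which will be the coset leaders of the odd
  syndromes.\<close>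

definition leaders :: "nat \<Rightarrow> nat set set" where
  "leaders n = {P. P \<subseteq> {..<n} \<and> (card P = 1 \<or> card P = 3)}"

lemma symdiff_singleton_pair:
  "i \<noteq> j \<Longrightarrow> {k} \<oplus> {i, j} = (if k = i then {j} else if k = j then {i} else {k, i, j})"
  by (auto simp: symdiff_def)

lemma symdiff_singleton_pair_leader:
  assumes "(i, j) \<in> pairs n" "k < n"
  shows "{k} \<oplus> {i, j} \<in> leaders n"
  using assms by (auto simp: leaders_def pairs_def symdiff_singleton_pair)

lemma obtain_sorted_triple:
  fixes A :: "nat set"
  assumes "card A = 3"
  obtains a b c where "A = {a, b, c}" "a < b" "b < c"
proof -
  let ?L = "sorted_list_of_set A"
  have "length ?L = 3"
    using assms by simp
  then obtain a b c where L: "?L = [a, b, c]"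
    by (auto simp: numeral_3_eq_3 length_Suc_conv simp del: length_sorted_list_of_set)
  have "sorted_wrt (<) ?L"
    by simp
  moreover have "finite A"
    using assms by (intro card_ge_0_finite) simp
  then have "set ?L = A"
    by simp
  ultimately show thesis
    using that L by auto
qed

lemma card_pairs_through:
  assumes "a < n"
  shows "card {(i, j) \<in> pairs n. i = a \<or> j = a} = n - 1"
proof -
  have "{(i, j) \<in> pairs n. i = a \<or> j = a} = (\<lambda>i. (i, a)) ` {..<a} \<union> (\<lambda>j. (a, j)) ` {a<..<n}"
    using assms by (auto simp: pairs_def)
  moreover have "card ((\<lambda>i. (i, a)) ` {..<a} \<union> (\<lambda>j. (a, j)) ` {a<..<n}) = a + (n - 1 - a)"
    by (subst card_Un_disjoint) (auto simp: card_image inj_on_def)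
  ultimately show ?thesis
    using assms by simp
qed

lemma card_pairs_within:
  assumes "P \<subseteq> {..<n}" "card P = 3"
  shows "card {(i, j) \<in> pairs n. i \<in> P \<and> j \<in> P} = 3"
proof -
  obtain a b c where abc: "P = {a, b, c}" "a < b" "b < c"
    using assms(2) by (rule obtain_sorted_triple)
  then have "{(i, j) \<in> pairs n. i \<in> P \<and> j \<in> P} = {(a, b), (a, c), (b, c)}"
    using assms(1) by (auto simp: pairs_def)
  then show ?thesis
    using abc by simp
qed

text \<open>The pairs \<open>{i, j}\<close> that a third coordinate \<open>k\<close> completes to a prescribed leader \<open>P\<close>:
  all pairs through the point of \<open>P\<close>, or the three pairs inside \<open>P\<close>.\<close>

lemma card_pairs_completing:
  assumes "P \<in> leaders n"
  shows "card {(i, j) \<in> pairs n. \<exists>k<n. {k} \<oplus> {i, j} = P} = (if card P = 1 then n - 1 else 3)"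
proof (cases "card P = 1")
  case True
  then obtain a where a: "P = {a}" "a < n"
    using assms by (auto simp: leaders_def card_1_singleton_iff)
  have "(\<exists>k<n. {k} \<oplus> {i, j} = P) \<longleftrightarrow> i = a \<or> j = a" if "(i, j) \<in> pairs n" for i j
    using that a by (auto simp: pairs_def symdiff_singleton_pair)
  then have "{(i, j) \<in> pairs n. \<exists>k<n. {k} \<oplus> {i, j} = P} = {(i, j) \<in> pairs n. i = a \<or> j = a}"
    by auto
  then show ?thesis
    using True card_pairs_through[OF a(2)] by simp
next
  case False
  then have P: "P \<subseteq> {..<n}" "card P = 3"
    using assms by (auto simp: leaders_def)
  have "(\<exists>k<n. {k} \<oplus> {i, j} = P) \<longleftrightarrow> i \<in> P \<and> j \<in> P" if "(i, j) \<in> pairs n" for i j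
  proof
    assume "\<exists>k<n. {k} \<oplus> {i, j} = P"
    then show "i \<in> P \<and> j \<in> P"
      using that P(2) by (auto simp: pairs_def symdiff_singleton_pair split: if_splits)
  next
    assume ij: "i \<in> P \<and> j \<in> P"
    have "finite P"
      using P(2) by (intro card_ge_0_finite) simp
    then have "card (P - {i, j}) = 1"
      using P(2) ij that by (simp add: card_Diff_subset pairs_def)
    then obtain k where k: "P - {i, j} = {k}"
      by (auto simp: card_1_singleton_iff)
    then have "{k} \<oplus> {i, j} = P" "k < n"
      using ij P(1) that by (auto simp: pairs_def symdiff_def)
    then show "\<exists>k<n. {k} \<oplus> {i, j} = P"
      by blast
  qed
  then have "{(i, j) \<in> pairs n. \<exists>k<n. {k} \<oplus> {i, j} = P} = {(i, j) \<in> pairs n. i \<in> P \<and> j \<in> P}"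
    by auto
  then show ?thesis
    using False card_pairs_within[OF P] by simp
qed

lemma card_leaders: "card (leaders n) = n + (n choose 3)"
proof -
  have "leaders n = {P. P \<subseteq> {..<n} \<and> card P = 1} \<union> {P. P \<subseteq> {..<n} \<and> card P = 3}"
    by (auto simp: leaders_def)
  moreover have "finite {P. P \<subseteq> {..<n} \<and> card P = k}" for k
    by (rule finite_subset[of _ "Pow {..<n}"]) auto
  ultimately have "card (leaders n)
      = card {P. P \<subseteq> {..<n} \<and> card P = 1} + card {P. P \<subseteq> {..<n} \<and> card P = 3}"
    by (simp add: card_Un_disjoint disjoint_iff)
  then show ?thesis
    by (simp add: n_subsets)
qed

text \<open>Half of the subsets of a nonempty finite set have odd size: toggling \<open>0\<close> swaps parities.\<close>

lemma card_odd_subsets: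
  assumes "0 < m"
  shows "card (odd_subsets m) = 2 ^ (m - 1)"
proof -
  let ?toggle = "\<lambda>t. t \<oplus> {0}"
  have toggle_subset: "?toggle t \<subseteq> {..<m}" if "t \<subseteq> {..<m}" for t
    using that assms by (auto simp: symdiff_def)
  have toggle_parity: "odd (card (?toggle t)) \<longleftrightarrow> even (card t)" if "t \<subseteq> {..<m}" for t
    using odd_card_symdiff[of t "{0}"] finite_subset[OF that] by simp
  have "bij_betw ?toggle (odd_subsets m) (even_subsets m)"
  proof (rule bij_betw_byWitness[where f' = ?toggle])
    show "?toggle ` odd_subsets m \<subseteq> even_subsets m" "?toggle ` even_subsets m \<subseteq> odd_subsets m"
      using toggle_subset toggle_parity by (auto simp: odd_subsets_def even_subsets_def)
  qed simp_all
  then have same: "card (odd_subsets m) = card (even_subsets m)"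
    by (rule bij_betw_same_card)
  have union: "odd_subsets m \<union> even_subsets m = Pow {..<m}"
    by (auto simp: odd_subsets_def even_subsets_def)
  have "card (odd_subsets m) + card (even_subsets m) = card (odd_subsets m \<union> even_subsets m)"
    by (intro card_Un_disjoint[symmetric])
      (auto simp: odd_subsets_def even_subsets_def intro: finite_subset[of _ "Pow {..<m}"])
  also have "\<dots> = 2 ^ m"
    by (simp add: union card_Pow)
  finally have "card (odd_subsets m) + card (even_subsets m) = 2 ^ m" .
  moreover have "(2::nat) ^ m = 2 * 2 ^ (m - 1)"
    using assms by (simp add: power_eq_if)
  ultimately show ?thesis
    using same by simp
qed

text \<open>A list of coordinate sets (parity checks) defines a linear map from syndromes to bit
  vectors, addition of bit vectors being \<open>xor_list\<close>.\<close>

definition xor_list :: "bool list \<Rightarrow> bool list \<Rightarrow> bool list" where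
  "xor_list u v = map2 (\<noteq>) u v"

lemma xor_list_commute: "xor_list u v = xor_list v u"
  by (auto simp: xor_list_def list_eq_iff_nth_eq)

lemma length_xor_list [simp]: "length (xor_list u v) = min (length u) (length v)"
  by (simp add: xor_list_def)

definition parities :: "nat list list \<Rightarrow> nat set \<Rightarrow> bool list" where
  "parities Cs t = map (\<lambda>C. odd (card (t \<inter> set C))) Cs"

lemma length_parities [simp]: "length (parities Cs t) = length Cs"
  by (simp add: parities_def)

lemma parities_symdiff:
  assumes "finite a" "finite b"
  shows "parities Cs (a \<oplus> b) = xor_list (parities Cs a) (parities Cs b)"
proof -
  have "(a \<oplus> b) \<inter> C = (a \<inter> C) \<oplus> (b \<inter> C)" for C
    by (auto simp: symdiff_def)
  then have "odd (card ((a \<oplus> b) \<inter> C)) \<longleftrightarrow> odd (card (a \<inter> C)) \<noteq> odd (card (b \<inter> C))" for C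
    using assms by (simp add: odd_card_symdiff)
  then show ?thesis
    by (simp add: parities_def xor_list_def list_eq_iff_nth_eq)
qed

section \<open>Syndrome colourings of the halved cube\<close>

text \<open>A parity-check matrix with \<open>n\<close> columns of odd weight in \<open>{..<m}\<close>; odd column weights make
  the syndromes of even-weight words even.\<close>

locale parity_check =
  fixes n m :: nat and col :: "nat \<Rightarrow> nat set"
  assumes col_subset: "i < n \<Longrightarrow> col i \<subseteq> {..<m}"
    and odd_card_col: "i < n \<Longrightarrow> odd (card (col i))"
begin

lemma finite_col: "i < n \<Longrightarrow> finite (col i)"
  using col_subset finite_subset by blast

definition syndrome :: "nat set \<Rightarrow> nat set" where
  "syndrome R = Xor.F col R"

lemma syndrome_empty [simp]: "syndrome {} = {}"
  by (simp add: syndrome_def)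

lemma syndrome_insert: "finite R \<Longrightarrow> i \<notin> R \<Longrightarrow> syndrome (insert i R) = col i \<oplus> syndrome R"
  by (simp add: syndrome_def)

lemma syndrome_singleton [simp]: "syndrome {i} = col i"
  by (simp add: syndrome_def symdiff_def)

lemma syndrome_pair: "i \<noteq> j \<Longrightarrow> syndrome {i, j} = col i \<oplus> col j"
  by (simp add: syndrome_insert)

lemma syndrome_symdiff: "finite A \<Longrightarrow> finite B \<Longrightarrow> syndrome (A \<oplus> B) = syndrome A \<oplus> syndrome B"
  unfolding syndrome_def by (rule Xor_symdiff)

lemma syndrome_parity:
  assumes "R \<subseteq> {..<n}"
  shows "syndrome R \<subseteq> {..<m} \<and> (odd (card (syndrome R)) \<longleftrightarrow> odd (card R))"
proof -
  have "finite R"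
    using assms finite_subset by blast
  then show ?thesis
    using assms
  proof (induction R rule: finite_induct)
    case (insert i R)
    then have "i < n" "finite (syndrome R)"
      using finite_subset[of "syndrome R" "{..<m}"] by auto
    then show ?case
      using insert col_subset[of i] odd_card_col[of i] finite_col[of i]
        odd_card_symdiff[of "col i" "syndrome R"]
      by (auto simp: syndrome_insert symdiff_def)
  qed simp
qed

lemma syndrome_flip2:
  assumes "length x = n" "(i, j) \<in> pairs n"
  shows "syndrome (supp (flip2 x i j)) = syndrome (supp x) \<oplus> (col i \<oplus> col j)"
  using assms by (simp add: pairs_def supp_flip2 syndrome_symdiff syndrome_pair)

lemma syndrome_vertex: "x \<in> halved_cube_vertices n \<Longrightarrow> syndrome (supp x) \<in> even_subsets m"
  using syndrome_parity[of "supp x"] supp_subset[of x]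
  by (auto simp: halved_cube_vertices_def even_subsets_def weight_eq_card_supp)

definition hits :: "nat set set \<Rightarrow> nat set \<Rightarrow> nat" where
  "hits S s = card {(i, j) \<in> pairs n. s \<oplus> (col i \<oplus> col j) \<in> S}"

definition equitable :: "nat \<Rightarrow> nat \<Rightarrow> nat set set \<Rightarrow> bool" where
  "equitable c \<delta> S \<longleftrightarrow> (\<forall>s \<in> even_subsets m. hits S s = c + (if s \<in> S then \<delta> else 0))"

definition colour_class :: "nat set set \<Rightarrow> bool list set" where
  "colour_class S = {x \<in> halved_cube_vertices n. syndrome (supp x) \<in> S}"

lemma flip2_in_colour_class:
  assumes "x \<in> halved_cube_vertices n" "(i, j) \<in> pairs n"
  shows "flip2 x i j \<in> colour_class S \<longleftrightarrow> syndrome (supp x) \<oplus> (col i \<oplus> col j) \<in> S"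
  using assms flip2_neighbour[OF assms]
  by (simp add: colour_class_def syndrome_flip2 halved_cube_vertices_def)

text \<open>The reduction: an equitable set of syndromes yields a perfect colouring of the halved
  \<open>n\<close>-cube; the bounds on \<open>c\<close> make the colour class nonempty and proper.\<close>

lemma equitable_perfect:
  assumes eq: "equitable c \<delta> S" and "0 < c" "c + \<delta> < card (pairs n)"
  shows "perfect_coloring_params (halved_cube_vertices n) halved_cube_adj (colour_class S)
           (c + \<delta>) (card (pairs n) - (c + \<delta>)) c (card (pairs n) - c)"
proof -
  let ?V = "halved_cube_vertices n" and ?C = "colour_class S"
  have inside: "card {y \<in> ?V. halved_cube_adj x y \<and> y \<in> ?C} = c + (if x \<in> ?C then \<delta> else 0)"
    and outside: "card {y \<in> ?V. halved_cube_adj x y \<and> y \<notin> ?C}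
                    = card (pairs n) - (c + (if x \<in> ?C then \<delta> else 0))"
    if x: "x \<in> ?V" for x
  proof -
    have "card {(i, j) \<in> pairs n. flip2 x i j \<in> ?C} = hits S (syndrome (supp x))"
      unfolding hits_def using flip2_in_colour_class[OF x] by (metis (no_types, lifting))
    also have "\<dots> = c + (if x \<in> ?C then \<delta> else 0)"
      using eq syndrome_vertex[OF x] x by (simp add: equitable_def colour_class_def)
    finally have hit: "card {(i, j) \<in> pairs n. flip2 x i j \<in> ?C} = c + (if x \<in> ?C then \<delta> else 0)" .
    then show "card {y \<in> ?V. halved_cube_adj x y \<and> y \<in> ?C} = c + (if x \<in> ?C then \<delta> else 0)"
      using card_neighbours[OF x, of "\<lambda>y. y \<in> ?C"] by simp
    show "card {y \<in> ?V. halved_cube_adj x y \<and> y \<notin> ?C}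
             = card (pairs n) - (c + (if x \<in> ?C then \<delta> else 0))"
      using card_neighbours_compl[OF x, of "\<lambda>y. y \<in> ?C"] hit by simp
  qed
  have zero: "replicate n False \<in> ?V"
    by (simp add: halved_cube_vertices_def weight_def)
  have "?C \<noteq> {}"
  proof
    assume "?C = {}"
    then show False
      using inside[OF zero] \<open>0 < c\<close> by simp
  qed
  moreover have "?C \<noteq> ?V"
  proof
    assume C: "?C = ?V"
    have "card (pairs n) - (c + \<delta>) = card {y \<in> ?V. halved_cube_adj (replicate n False) y \<and> y \<notin> ?C}"
      using outside[OF zero] C zero by simp
    also have "{y \<in> ?V. halved_cube_adj (replicate n False) y \<and> y \<notin> ?C} = {}"
      using C by blast
    finally show False
      using \<open>c + \<delta> < card (pairs n)\<close> by simp
  qed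
  moreover have "?C \<subseteq> ?V"
    by (auto simp: colour_class_def)
  ultimately show ?thesis
    unfolding perfect_coloring_params_def using inside outside by auto
qed

lemma equitable_empty: "equitable 0 \<delta> {}"
  by (simp add: equitable_def hits_def)

lemma equitable_Un:
  assumes "equitable c1 \<delta> S1" "equitable c2 \<delta> S2" "S1 \<inter> S2 = {}"
  shows "equitable (c1 + c2) \<delta> (S1 \<union> S2)"
  unfolding equitable_def
proof
  fix s assume s: "s \<in> even_subsets m"
  let ?hit = "\<lambda>S. {(i, j) \<in> pairs n. s \<oplus> (col i \<oplus> col j) \<in> S}"
  have "?hit (S1 \<union> S2) = ?hit S1 \<union> ?hit S2" and "?hit S1 \<inter> ?hit S2 = {}"
    using assms(3) by auto
  moreover have "finite (?hit S)" for S
    by (rule finite_subset[OF _ finite_pairs]) auto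
  ultimately have "hits (S1 \<union> S2) s = hits S1 s + hits S2 s"
    unfolding hits_def by (simp add: card_Un_disjoint)
  then show "hits (S1 \<union> S2) s = c1 + c2 + (if s \<in> S1 \<union> S2 then \<delta> else 0)"
    using assms s unfolding equitable_def by auto
qed

text \<open>When the syndromes of the 1- and 3-subsets of coordinates are
  exactly the odd syndromes, each bijectively, every translate of the columns by an odd syndrome
  \<open>s\<^sub>0\<close> is equitable: for an even \<open>s\<close>, let \<open>P\<close> be the leader of \<open>s \<oplus> s\<^sub>0\<close>; the shifts landing
  in the translate are those along the pairs that a third coordinate completes to \<open>P\<close>.\<close>

definition translate :: "nat set \<Rightarrow> nat set set" where
  "translate s0 = (\<lambda>k. s0 \<oplus> col k) ` {..<n}"

lemma shift_in_translate_iff: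
  assumes inj: "inj_on syndrome (leaders n)" and P: "P \<in> leaders n" "syndrome P = s \<oplus> s0"
    and ij: "(i, j) \<in> pairs n"
  shows "s \<oplus> (col i \<oplus> col j) \<in> translate s0 \<longleftrightarrow> (\<exists>k<n. {k} \<oplus> {i, j} = P)"
proof -
  have "s \<oplus> (col i \<oplus> col j) = s0 \<oplus> col k \<longleftrightarrow> {k} \<oplus> {i, j} = P" if k: "k < n" for k
  proof -
    have "syndrome ({k} \<oplus> {i, j}) = col k \<oplus> (col i \<oplus> col j)"
      using ij by (simp add: syndrome_symdiff syndrome_pair pairs_def)
    then have "s \<oplus> (col i \<oplus> col j) = s0 \<oplus> col k \<longleftrightarrow> syndrome ({k} \<oplus> {i, j}) = syndrome P"
      unfolding P(2) symdiff_def set_eq_iff by blast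
    then show ?thesis
      using inj_onD[OF inj _ symdiff_singleton_pair_leader[OF ij k] P(1)] by blast
  qed
  then show ?thesis
    unfolding translate_def by blast
qed

lemma in_translate_iff:
  assumes inj: "inj_on syndrome (leaders n)" and P: "P \<in> leaders n" "syndrome P = s \<oplus> s0"
  shows "s \<in> translate s0 \<longleftrightarrow> card P = 1"
proof -
  have "s = s0 \<oplus> col k \<longleftrightarrow> {k} = P" if "k < n" for k
  proof -
    have "s = s0 \<oplus> col k \<longleftrightarrow> syndrome {k} = syndrome P"
      unfolding P(2) syndrome_singleton symdiff_def set_eq_iff by blast
    moreover have "{k} \<in> leaders n"
      using that by (simp add: leaders_def)
    ultimately show ?thesis
      using inj_onD[OF inj _ _ P(1)] by blast
  qed
  then have "s \<in> translate s0 \<longleftrightarrow> (\<exists>k<n. {k} = P)"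
    unfolding translate_def by blast
  then show ?thesis
    using P(1) by (auto simp: leaders_def card_1_singleton_iff)
qed

lemma translate_equitable:
  assumes bij: "bij_betw syndrome (leaders n) (odd_subsets m)"
    and n: "4 \<le> n" and s0: "s0 \<in> odd_subsets m"
  shows "equitable 3 (n - 4) (translate s0)"
  unfolding equitable_def
proof
  fix s assume s: "s \<in> even_subsets m"
  have "finite s" "finite s0"
    using s s0 finite_subset by (auto simp: even_subsets_def odd_subsets_def)
  then have "s \<oplus> s0 \<in> odd_subsets m"
    using s s0 odd_card_symdiff[of s s0]
    by (auto simp: even_subsets_def odd_subsets_def symdiff_def)
  then obtain P where P: "P \<in> leaders n" "syndrome P = s \<oplus> s0"
    using bij by (metis bij_betw_imp_surj_on imageE)
  have inj: "inj_on syndrome (leaders n)"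
    using bij by (simp add: bij_betw_def)
  have "hits (translate s0) s = card {(i, j) \<in> pairs n. \<exists>k<n. {k} \<oplus> {i, j} = P}"
    unfolding hits_def using shift_in_translate_iff[OF inj P] by (metis (no_types, lifting))
  then show "hits (translate s0) s = 3 + (if s \<in> translate s0 then n - 4 else 0)"
    using card_pairs_completing[OF P(1)] in_translate_iff[OF inj P] n by simp
qed

lemma parity_class_equitable:
  assumes hist: "\<And>u. length u = length Cs \<Longrightarrow>
      card {(i, j) \<in> pairs n. xor_list (parities Cs (col i)) (parities Cs (col j)) = u}
        = (if u = replicate (length Cs) False then c + \<delta> else c)"
    and a: "length a = length Cs"
  shows "equitable c \<delta> {t. parities Cs t = a}"
  unfolding equitable_def
proof
  fix s assume "s \<in> even_subsets m"
  then have "finite s"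
    by (auto simp: even_subsets_def intro: finite_subset)
  let ?u = "xor_list (parities Cs s) a"
  have "s \<oplus> (col i \<oplus> col j) \<in> {t. parities Cs t = a}
      \<longleftrightarrow> xor_list (parities Cs (col i)) (parities Cs (col j)) = ?u"
    if "(i, j) \<in> pairs n" for i j
  proof -
    have "finite (col i)" "finite (col j)"
      using that finite_col by (auto simp: pairs_def)
    then show ?thesis
      using \<open>finite s\<close> a
      by (auto simp: parities_symdiff xor_list_def list_eq_iff_nth_eq)
  qed
  then have "hits {t. parities Cs t = a} s = card {(i, j) \<in> pairs n.
      xor_list (parities Cs (col i)) (parities Cs (col j)) = ?u}"
    unfolding hits_def by (metis (no_types, lifting))
  also have "\<dots> = (if ?u = replicate (length Cs) False then c + \<delta> else c)"
    using a by (intro hist) simp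
  also have "?u = replicate (length Cs) False \<longleftrightarrow> s \<in> {t. parities Cs t = a}"
    using a by (auto simp: xor_list_def list_eq_iff_nth_eq)
  finally show "hits {t. parities Cs t = a} s = c + (if s \<in> {t. parities Cs t = a} then \<delta> else 0)"
    by simp
qed

end

section \<open>Counting occurrences with a binary trie\<close>

text \<open>To verify a histogram of a long list of bit vectors by evaluation, the list is inserted
  into a complete binary trie of counters, whose leaves are then inspected in one pass.\<close>

datatype count_trie = Leaf nat | Node count_trie count_trie

fun trie_count :: "bool list \<Rightarrow> count_trie \<Rightarrow> nat" where
  "trie_count [] (Leaf k) = k"
| "trie_count (b # bs) (Node l r) = trie_count bs (if b then r else l)"
| "trie_count _ _ = 0"

fun trie_add :: "bool list \<Rightarrow> count_trie \<Rightarrow> count_trie" where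
  "trie_add [] (Leaf k) = Leaf (Suc k)"
| "trie_add (b # bs) (Node l r) = (if b then Node l (trie_add bs r) else Node (trie_add bs l) r)"
| "trie_add _ t = t"

fun empty_trie :: "nat \<Rightarrow> count_trie" where
  "empty_trie 0 = Leaf 0"
| "empty_trie (Suc d) = Node (empty_trie d) (empty_trie d)"

fun has_depth :: "nat \<Rightarrow> count_trie \<Rightarrow> bool" where
  "has_depth 0 (Leaf k) = True"
| "has_depth (Suc d) (Node l r) = (has_depth d l \<and> has_depth d r)"
| "has_depth _ _ = False"

fun trie_all :: "(bool list \<Rightarrow> nat \<Rightarrow> bool) \<Rightarrow> count_trie \<Rightarrow> bool" where
  "trie_all P (Leaf k) = P [] k"
| "trie_all P (Node l r) = (trie_all (\<lambda>u. P (False # u)) l \<and> trie_all (\<lambda>u. P (True # u)) r)"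

definition trie_of :: "nat \<Rightarrow> bool list list \<Rightarrow> count_trie" where
  "trie_of d vs = foldr trie_add vs (empty_trie d)"

lemma has_depth_empty_trie: "has_depth d (empty_trie d)"
  by (induction d) auto

lemma trie_count_empty_trie: "trie_count u (empty_trie d) = 0"
proof (induction d arbitrary: u)
  case 0
  then show ?case by (cases u) auto
next
  case (Suc d)
  then show ?case by (cases u) auto
qed

lemma trie_add_correct:
  assumes "has_depth d t" "length v = d"
  shows "has_depth d (trie_add v t) \<and> trie_count u (trie_add v t) = trie_count u t + (if u = v then 1 else 0)"
  using assms
proof (induction d arbitrary: t u v)
  case 0
  then show ?case
    by (cases t; cases u) auto
next
  case (Suc d)
  from Suc.prems obtain l r b w where "t = Node l r" "v = b # w"
    by (cases t; cases v) auto
  with Suc show ?case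
    by (cases u) auto
qed

lemma trie_of_correct:
  assumes "\<forall>v \<in> set vs. length v = d"
  shows "has_depth d (trie_of d vs) \<and> trie_count u (trie_of d vs) = count_list vs u"
  using assms trie_add_correct
  by (induction vs) (auto simp: trie_of_def has_depth_empty_trie trie_count_empty_trie)

lemma trie_all_count:
  assumes "trie_all P t" "has_depth d t" "length u = d"
  shows "P u (trie_count u t)"
  using assms
proof (induction d arbitrary: P t u)
  case 0
  then show ?case
    by (cases t) auto
next
  case (Suc d)
  from Suc.prems obtain l r b w where t: "t = Node l r" and u: "u = b # w"
    by (cases t; cases u) auto
  have "trie_all (\<lambda>u. P (b # u)) (if b then r else l)" "has_depth d (if b then r else l)" "length w = d"
    using Suc.prems t u by auto
  then have "P (b # w) (trie_count w (if b then r else l))"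
    by (rule Suc.IH)
  then show ?case
    using t u by simp
qed

lemma count_list_by_trie:
  assumes "\<forall>v \<in> set vs. length v = d" "trie_all P (trie_of d vs)" "length u = d"
  shows "P u (count_list vs u)"
  using trie_all_count[OF assms(2) _ assms(3)] trie_of_correct[OF assms(1)] by metis

section \<open>The Golay parity-check matrix\<close>

text \<open>\<open>golay_cols ! i\<close> is the \<open>i\<close>-th column of the parity-check matrix \<open>(B | I)\<close> of the extended
  binary Golay code, where \<open>B\<close> is the symmetric bordered circulant of quadratic residues
  modulo 11.\<close>

definition golay_cols :: "bool list list" where
  "golay_cols = [
     [False, True, True, True, True, True, True, True, True, True, True, True],
     [True, True, True, False, True, True, True, False, False, False, True, False],
     [True, True, False, True, True, True, False, False, False, True, False, True],
     [True, False, True, True, True, False, False, False, True, False, True, True],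
     [True, True, True, True, False, False, False, True, False, True, True, False],
     [True, True, True, False, False, False, True, False, True, True, False, True],
     [True, True, False, False, False, True, False, True, True, False, True, True],
     [True, False, False, False, True, False, True, True, False, True, True, True],
     [True, False, False, True, False, True, True, False, True, True, True, False],
     [True, False, True, False, True, True, False, True, True, True, False, False],
     [True, True, False, True, True, False, True, True, True, False, False, False],
     [True, False, True, True, False, True, True, True, False, False, False, True],
     [True, False, False, False, False, False, False, False, False, False, False, False],
     [False, True, False, False, False, False, False, False, False, False, False, False],
     [False, False, True, False, False, False, False, False, False, False, False, False],
     [False, False, False, True, False, False, False, False, False, False, False, False],
     [False, False, False, False, True, False, False, False, False, False, False, False],
     [False, False, False, False, False, True, False, False, False, False, False, False],
     [False, False, False, False, False, False, True, False, False, False, False, False],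
     [False, False, False, False, False, False, False, True, False, False, False, False],
     [False, False, False, False, False, False, False, False, True, False, False, False],
     [False, False, False, False, False, False, False, False, False, True, False, False],
     [False, False, False, False, False, False, False, False, False, False, True, False],
     [False, False, False, False, False, False, False, False, False, False, False, True]]"

definition golay_col :: "nat \<Rightarrow> nat set" where
  "golay_col i = supp (golay_cols ! i)"

lemma golay_cols_shape:
  "length golay_cols = 24" "\<forall>w \<in> set golay_cols. length w = 12 \<and> odd (weight w)"
  by (simp_all add: golay_cols_def weight_def)

interpretation golay: parity_check 24 12 golay_col
proof
  fix i :: nat assume "i < 24"
  then have "golay_cols ! i \<in> set golay_cols"
    using golay_cols_shape(1) by simp
  then show "golay_col i \<subseteq> {..<12}" "odd (card (golay_col i))"
    using golay_cols_shape(2) supp_subset[of "golay_cols ! i"]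
    by (auto simp: golay_col_def weight_eq_card_supp)
qed

text \<open>Over the two-element field, the syndrome of a word is a matrix-vector product; \<open>lin_comb m l ws\<close>
  adds up the words \<open>ws ! k\<close> of length \<open>m\<close> selected by the bits of \<open>l\<close>.\<close>

fun lin_comb :: "nat \<Rightarrow> bool list \<Rightarrow> bool list list \<Rightarrow> bool list" where
  "lin_comb m (b # bs) (w # ws) = (if b then xor_list w (lin_comb m bs ws) else lin_comb m bs ws)"
| "lin_comb m _ _ = replicate m False"

lemma supp_xor_list: "length u = length v \<Longrightarrow> supp (xor_list u v) = supp u \<oplus> supp v"
  by (auto simp: supp_def xor_list_def symdiff_def)

lemma supp_Cons: "supp (b # bs) = (if b then insert 0 (Suc ` supp bs) else Suc ` supp bs)"
proof -
  have "i \<in> supp (b # bs) \<longleftrightarrow> (i = 0 \<and> b) \<or> (\<exists>k. i = Suc k \<and> k \<in> supp bs)" for i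
    by (cases i) (auto simp: supp_def)
  then show ?thesis
    by auto
qed

lemma supp_lin_comb:
  assumes "\<forall>w \<in> set ws. length w = m" "length l \<le> length ws"
  shows "length (lin_comb m l ws) = m \<and> supp (lin_comb m l ws) = Xor.F (\<lambda>k. supp (ws ! k)) (supp l)"
  using assms
proof (induction l arbitrary: ws)
  case Nil
  then show ?case
    by (cases ws) (auto simp: supp_def)
next
  case (Cons b bs)
  then obtain w ws' where ws: "ws = w # ws'"
    by (cases ws) auto
  have IH: "length (lin_comb m bs ws') = m"
    "supp (lin_comb m bs ws') = Xor.F (\<lambda>k. supp (ws' ! k)) (supp bs)"
    using Cons ws by auto
  have shift: "Xor.F (\<lambda>k. supp (ws ! k)) (Suc ` supp bs) = Xor.F (\<lambda>k. supp (ws' ! k)) (supp bs)"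
    by (simp add: Xor.reindex ws o_def)
  have "length w = m"
    using Cons.prems ws by simp
  then show ?case
    using IH shift ws by (auto simp: supp_Cons supp_xor_list)
qed

fun triplewise :: "('a \<Rightarrow> 'a \<Rightarrow> 'a \<Rightarrow> bool) \<Rightarrow> 'a list \<Rightarrow> bool" where
  "triplewise P [] = True"
| "triplewise P (x # xs) = (sorted_wrt (P x) xs \<and> triplewise P xs)"

lemma triplewise_nth:
  assumes "triplewise P xs" "i < j" "j < k" "k < length xs"
  shows "P (xs ! i) (xs ! j) (xs ! k)"
  using assms
proof (induction xs arbitrary: i j k)
  case (Cons x xs)
  obtain j' k' where jk: "j = Suc j'" "k = Suc k'"
    using Cons.prems by (cases j; cases k) auto
  show ?case
  proof (cases i)
    case 0
    then show ?thesis
      using Cons.prems jk by (simp add: sorted_wrt_iff_nth_less)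
  next
    case (Suc i')
    then show ?thesis
      using Cons jk by simp
  qed
qed simp

text \<open>The structure of the Golay columns, verified by evaluation: the last twelve are the unit
  vectors, the first twelve form a matrix \<open>B\<close> with \<open>B\<^sup>2 = I\<close>, and sums of one, two or three of
  them have weight at least 6, 5 and 4.\<close>

definition unit_words :: "nat \<Rightarrow> bool list list" where
  "unit_words m = map (\<lambda>j. map (\<lambda>k. k = j) [0..<m]) [0..<m]"

lemma supp_unit_word: "j < m \<Longrightarrow> supp (unit_words m ! j) = {j}"
  by (auto simp: supp_def unit_words_def)

lemma golay_cols_unit: "drop 12 golay_cols = unit_words 12"
  by (simp add: golay_cols_def unit_words_def upt_conv_Cons)

lemma golay_cols_involution: "map (\<lambda>l. lin_comb 12 l golay_cols) (take 12 golay_cols) = unit_words 12"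
  by code_simp

lemma golay_cols_weights:
  "\<forall>w \<in> set (take 12 golay_cols). 6 \<le> weight w"
  "sorted_wrt (\<lambda>u v. 5 \<le> weight (xor_list u v)) (take 12 golay_cols)"
  "triplewise (\<lambda>u v w. 4 \<le> weight (xor_list u (xor_list v w))) (take 12 golay_cols)"
  by code_simp+

lemma golay_cols_nth:
  "i < 24 \<Longrightarrow> golay_cols ! i \<in> set golay_cols" "i < 24 \<Longrightarrow> length (golay_cols ! i) = 12"
  using golay_cols_shape by auto

lemma golay_syndrome_supp:
  "length l \<le> 24 \<Longrightarrow> golay.syndrome (supp l) = supp (lin_comb 12 l golay_cols)"
  using supp_lin_comb[of golay_cols 12 l] golay_cols_shape
  unfolding golay.syndrome_def by (simp add: golay_col_def[abs_def])

lemma golay_col_high: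
  assumes "j < 12"
  shows "golay_col (12 + j) = {j}"
proof -
  have "golay_cols ! (12 + j) = drop 12 golay_cols ! j"
    using golay_cols_shape(1) assms by simp
  then show ?thesis
    using assms by (simp add: golay_col_def golay_cols_unit supp_unit_word)
qed

lemma golay_syndrome_col:
  assumes "i < 12"
  shows "golay.syndrome (golay_col i) = {i}"
proof -
  have "golay.syndrome (golay_col i) = supp (lin_comb 12 (golay_cols ! i) golay_cols)"
    using golay_syndrome_supp golay_cols_nth[of i] assms by (simp add: golay_col_def)
  also have "lin_comb 12 (golay_cols ! i) golay_cols = unit_words 12 ! i"
    using arg_cong[OF golay_cols_involution, of "\<lambda>xs. xs ! i"] assms golay_cols_shape(1) by simp
  finally show ?thesis
    using assms by (simp add: supp_unit_word)
qed

lemma golay_involution: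
  assumes "A \<subseteq> {..<12}"
  shows "golay.syndrome (golay.syndrome A) = A"
proof -
  have "finite A"
    using assms finite_subset by blast
  then show ?thesis
    using assms
  proof (induction A rule: finite_induct)
    case (insert i A)
    then have i: "i < 12" and "A \<subseteq> {..<24}"
      by auto
    then have "finite (golay.syndrome A)"
      using golay.syndrome_parity[of A] finite_subset by blast
    then have "golay.syndrome (golay.syndrome (insert i A))
        = golay.syndrome (golay_col i) \<oplus> golay.syndrome (golay.syndrome A)"
      using insert golay.finite_col[of i] by (simp add: golay.syndrome_insert golay.syndrome_symdiff)
    also have "\<dots> = {i} \<oplus> A"
      using insert i by (simp add: golay_syndrome_col)
    finally show ?case
      using insert by (auto simp: symdiff_def)
  qed simp
qed

lemma golay_syndrome_high:
  assumes "R \<subseteq> {12..<24}"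
  shows "golay.syndrome R = (\<lambda>i. i - 12) ` R"
proof -
  have "finite R"
    using assms finite_subset by blast
  then show ?thesis
    using assms
  proof (induction R rule: finite_induct)
    case (insert i R)
    have "i - 12 \<notin> (\<lambda>i. i - 12) ` R"
    proof
      assume "i - 12 \<in> (\<lambda>i. i - 12) ` R"
      then obtain k where "k \<in> R" "i - 12 = k - 12"
        by blast
      moreover have "12 \<le> k" "12 \<le> i"
        using insert.prems \<open>k \<in> R\<close> by auto
      ultimately show False
        using insert.hyps(2) by (metis le_add_diff_inverse2)
    qed
    moreover have "golay_col i = {i - 12}"
      using golay_col_high[of "i - 12"] insert.prems by auto
    ultimately show ?case
      using insert by (auto simp: golay.syndrome_insert symdiff_def)
  qed simp
qed

lemma golay_col_symdiff:
  "i < 24 \<Longrightarrow> j < 24 \<Longrightarrow> golay_col i \<oplus> golay_col j = supp (xor_list (golay_cols ! i) (golay_cols ! j))"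
  by (simp add: golay_col_def supp_xor_list golay_cols_nth)

lemma golay_low_weight_small:
  assumes A: "A \<subseteq> {..<12}" "A \<noteq> {}" "card A \<le> 3"
  shows "7 \<le> card A + card (golay.syndrome A)"
proof -
  have "finite A"
    using A(1) finite_subset by blast
  then have "card A \<noteq> 0"
    using A(2) by simp
  then consider "card A = 1" | "card A = 2" | "card A = 3"
    using A(3) by linarith
  then show ?thesis
  proof cases
    case 1
    then obtain a where a: "A = {a}" "a < 12"
      using A(1) by (auto simp: card_1_singleton_iff)
    have "golay_cols ! a = take 12 golay_cols ! a"
      using a by simp
    moreover have "take 12 golay_cols ! a \<in> set (take 12 golay_cols)"
      using a golay_cols_shape(1) by (intro nth_mem) simp
    ultimately have "6 \<le> weight (golay_cols ! a)"
      using golay_cols_weights(1) by simp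
    then show ?thesis
      using a by (simp add: golay_col_def weight_eq_card_supp)
  next
    case 2
    then obtain x y where xy: "A = {x, y}" "x \<noteq> y"
      by (auto simp: card_2_iff)
    define a b where "a = min x y" and "b = max x y"
    have ab: "A = {a, b}" "a < b" "b < 12"
      using xy A(1) by (auto simp: a_def b_def min_def max_def)
    have "5 \<le> weight (xor_list (golay_cols ! a) (golay_cols ! b))"
      using sorted_wrt_nth_less[OF golay_cols_weights(2), of a b] ab golay_cols_shape(1) by simp
    then show ?thesis
      using ab 2 by (simp add: golay.syndrome_pair golay_col_symdiff weight_eq_card_supp)
  next
    case 3
    then obtain a b c where abc: "A = {a, b, c}" "a < b" "b < c"
      by (rule obtain_sorted_triple)
    then have "c < 12"
      using A(1) by auto
    then have "4 \<le> weight (xor_list (golay_cols ! a) (xor_list (golay_cols ! b) (golay_cols ! c)))"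
      using triplewise_nth[OF golay_cols_weights(3), of a b c] abc golay_cols_shape(1) by simp
    moreover have "golay.syndrome A
        = supp (xor_list (golay_cols ! a) (xor_list (golay_cols ! b) (golay_cols ! c)))"
      using abc \<open>c < 12\<close>
      by (simp add: golay.syndrome_insert golay_col_symdiff supp_xor_list golay_cols_nth)
         (simp add: golay_col_def)
    ultimately show ?thesis
      using 3 by (simp add: weight_eq_card_supp)
  qed
qed

lemma golay_low_weight:
  assumes A: "A \<subseteq> {..<12}" "A \<noteq> {}"
  shows "7 \<le> card A + card (golay.syndrome A)"
proof (cases "card A \<le> 3 \<or> card (golay.syndrome A) \<le> 2")
  case small: True
  show ?thesis
  proof (cases "card A \<le> 3")
    case True
    then show ?thesis
      using golay_low_weight_small[OF A] by simp
  next
    case False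
    text \<open>Apply the small case to the syndrome, using that the syndrome map is an involution.\<close>
    have "golay.syndrome A \<subseteq> {..<12}"
      using golay.syndrome_parity[of A] A(1) by fastforce
    moreover have "golay.syndrome (golay.syndrome A) = A"
      using golay_involution[OF A(1)] .
    ultimately show ?thesis
      using golay_low_weight_small[of "golay.syndrome A"] small False A(2) by fastforce
  qed
qed simp

text \<open>Hence the kernel of the syndrome map (the extended Golay code) has minimum weight at least 7:
  a codeword splits into its two halves, and the second half is the shifted syndrome of the first.\<close>

lemma golay_min_weight:
  assumes R: "R \<subseteq> {..<24}" "R \<noteq> {}" "golay.syndrome R = {}"
  shows "7 \<le> card R"
proof -
  define R1 R2 where "R1 = R \<inter> {..<12}" and "R2 = R - {..<12}"
  have fin: "finite R1" "finite R2"
    using R(1) finite_subset by (auto simp: R1_def R2_def)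
  have R_split: "R = R1 \<oplus> R2" "R1 \<inter> R2 = {}" "R = R1 \<union> R2"
    by (auto simp: R1_def R2_def symdiff_def)
  have R2: "R2 \<subseteq> {12..<24}"
    using R(1) by (auto simp: R2_def)
  have "inj_on (\<lambda>i. i - 12) R2"
  proof (rule inj_onI)
    fix x y assume "x \<in> R2" "y \<in> R2" "x - 12 = y - 12"
    moreover have "12 \<le> x" "12 \<le> y"
      using R2 \<open>x \<in> R2\<close> \<open>y \<in> R2\<close> by auto
    ultimately show "x = y"
      by simp
  qed
  then have card_R2: "card (golay.syndrome R2) = card R2"
    using golay_syndrome_high[OF R2] by (simp add: card_image)
  have "golay.syndrome R1 \<oplus> golay.syndrome R2 = {}"
    using R(3) fin by (simp add: R_split(1) golay.syndrome_symdiff)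
  then have same: "golay.syndrome R1 = golay.syndrome R2"
    by (simp add: symdiff_empty_iff)
  have card_R: "card R = card R1 + card (golay.syndrome R1)"
    using fin R_split(2,3) card_R2 same by (simp add: card_Un_disjoint)
  show ?thesis
  proof (cases "R1 = {}")
    case True
    then have "R2 = {}"
      using same golay_syndrome_high[OF R2] by simp
    then show ?thesis
      using True R(2) R_split(3) by simp
  next
    case False
    then show ?thesis
      using golay_low_weight[of R1] card_R by (simp add: R1_def)
  qed
qed

section \<open>Coset leaders and translates: blocks with \<open>c = 3\<close>\<close>

text \<open>The 1- and 3-subsets of the 24 coordinates are the coset leaders of the odd syndromes:
  distinct leaders differ in at most 6 coordinates, which is below the minimum weight, and there
  are \<open>24 + 2024 = 2\<^sup>1\<^sup>1\<close> of them.\<close>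

lemma golay_leaders_inj: "inj_on golay.syndrome (leaders 24)"
proof (rule inj_onI)
  fix P Q assume PQ: "P \<in> leaders 24" "Q \<in> leaders 24" "golay.syndrome P = golay.syndrome Q"
  then have fin: "finite P" "finite Q"
    by (auto simp: leaders_def intro: finite_subset)
  then have "golay.syndrome (P \<oplus> Q) = {}"
    using PQ(3) by (simp add: golay.syndrome_symdiff symdiff_empty_iff)
  moreover have "P \<oplus> Q \<subseteq> {..<24}"
    using PQ(1,2) by (auto simp: leaders_def symdiff_def)
  moreover have "card (P \<oplus> Q) \<le> 6"
  proof -
    have "card (P \<oplus> Q) \<le> card (P \<union> Q)"
      using fin by (intro card_mono) (auto simp: symdiff_def)
    also have "\<dots> \<le> card P + card Q"
      by (rule card_Un_le)
    finally show ?thesis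
      using PQ(1,2) by (auto simp: leaders_def)
  qed
  ultimately have "P \<oplus> Q = {}"
    using golay_min_weight[of "P \<oplus> Q"] by fastforce
  then show "P = Q"
    by (simp add: symdiff_empty_iff)
qed

lemma golay_leaders_bij: "bij_betw golay.syndrome (leaders 24) (odd_subsets 12)"
proof -
  have sub: "golay.syndrome ` leaders 24 \<subseteq> odd_subsets 12"
    using golay.syndrome_parity by (fastforce simp: leaders_def odd_subsets_def)
  have "card (leaders 24) = 2048"
    by (simp add: card_leaders numeral_eq_Suc binomial_Suc_Suc)
  then have "card (golay.syndrome ` leaders 24) = card (odd_subsets 12)"
    using golay_leaders_inj by (simp add: card_image card_odd_subsets)
  then have "golay.syndrome ` leaders 24 = odd_subsets 12"
    using sub by (intro card_subset_eq) (auto simp: odd_subsets_def intro: finite_subset[of _ "Pow {..<12}"])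
  then show ?thesis
    using golay_leaders_inj by (simp add: bij_betw_def)
qed

lemma golay_translate_equitable: "s0 \<in> odd_subsets 12 \<Longrightarrow> golay.equitable 3 20 (golay.translate s0)"
  using golay.translate_equitable[OF golay_leaders_bij] by simp

section \<open>Parity classes: blocks with \<open>c = 8\<close>\<close>

text \<open>Their values on the 24 columns (the \<open>labels\<close>) form a
  multiset of 5-bit vectors whose pairwise sums hit \<open>0\<close> exactly 28 times and every nonzero vector
  exactly 8 times, so each of the 32 parity classes is equitable with \<open>c = 8\<close>.\<close>

definition golay_checks :: "nat list list" where
  "golay_checks = [[5, 6, 8, 11], [2, 4, 8, 9], [2, 4, 8, 11], [4, 5, 8, 9], [0, 1, 7, 10]]"

definition golay_labels :: "bool list list" where
  "golay_labels = [
     [False, False, False, False, True],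
     [False, False, False, False, True],
     [False, False, False, True, False],
     [False, True, False, False, False],
     [False, False, True, True, False],
     [True, True, True, False, False],
     [True, True, False, False, False],
     [False, False, False, False, True],
     [True, False, True, True, False],
     [False, False, True, False, False],
     [False, False, False, False, True],
     [True, True, False, True, False],
     [False, False, False, False, True],
     [False, False, False, False, True],
     [False, True, True, False, False],
     [False, False, False, False, False],
     [False, True, True, True, False],
     [True, False, False, True, False],
     [True, False, False, False, False],
     [False, False, False, False, True],
     [True, True, True, True, False],
     [False, True, False, True, False],
     [False, False, False, False, True],
     [True, False, True, False, False]]"

definition word_parities :: "nat list list \<Rightarrow> bool list \<Rightarrow> bool list" where
  "word_parities Cs l = map (\<lambda>C. odd (length (filter (\<lambda>k. k < length l \<and> l ! k) C))) Cs"

lemma parities_supp: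
  assumes "\<forall>C \<in> set Cs. distinct C"
  shows "parities Cs (supp l) = word_parities Cs l"
proof -
  have "card (supp l \<inter> set C) = length (filter (\<lambda>k. k < length l \<and> l ! k) C)" if "distinct C" for C
  proof -
    have "supp l \<inter> set C = set (filter (\<lambda>k. k < length l \<and> l ! k) C)"
      by (auto simp: supp_def)
    then show ?thesis
      using that by (metis distinct_card distinct_filter)
  qed
  then show ?thesis
    using assms by (simp add: parities_def word_parities_def)
qed

lemma golay_labels_eq: "map (word_parities golay_checks) golay_cols = golay_labels"
  by code_simp

lemma golay_label: "i < 24 \<Longrightarrow> parities golay_checks (golay_col i) = golay_labels ! i"
  using arg_cong[OF golay_labels_eq, of "\<lambda>xs. xs ! i"] golay_cols_shape(1)
  by (simp add: golay_col_def parities_supp golay_checks_def)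

lemma golay_label_pair_sums:
  "trie_all (\<lambda>u k. k = (if u = replicate 5 False then 28 else 8))
     (trie_of 5 (map (\<lambda>(i, j). xor_list (golay_labels ! i) (golay_labels ! j)) (pair_list 24)))"
  by code_simp

lemma golay_label_histogram:
  assumes "length u = 5"
  shows "card {(i, j) \<in> pairs 24. xor_list (golay_labels ! i) (golay_labels ! j) = u}
       = (if u = replicate 5 False then 28 else 8)"
proof -
  let ?sums = "map (\<lambda>(i, j). xor_list (golay_labels ! i) (golay_labels ! j)) (pair_list 24)"
  have "\<forall>v \<in> set ?sums. length v = 5"
    by code_simp
  then have "count_list ?sums u = (if u = replicate 5 False then 28 else 8)"
    using count_list_by_trie[OF _ golay_label_pair_sums assms] by blast
  moreover have "card {(i, j) \<in> pairs 24. xor_list (golay_labels ! i) (golay_labels ! j) = u}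
      = count_list ?sums u"
    using card_pairs_filter[of 24 "\<lambda>(i, j). xor_list (golay_labels ! i) (golay_labels ! j) = u"]
    by (simp add: count_list_eq_length_filter filter_map o_def split_def eq_commute[of u])
  ultimately show ?thesis
    by simp
qed

definition golay_class :: "bool list \<Rightarrow> nat set set" where
  "golay_class a = {t. parities golay_checks t = a}"

lemma golay_class_equitable:
  assumes "length a = 5"
  shows "golay.equitable 8 20 (golay_class a)"
  unfolding golay_class_def
proof (rule golay.parity_class_equitable)
  fix u :: "bool list" assume u: "length u = length golay_checks"
  have len: "length golay_checks = 5"
    by (simp add: golay_checks_def)
  have "{(i, j) \<in> pairs 24. xor_list (parities golay_checks (golay_col i)) (parities golay_checks (golay_col j)) = u}
      = {(i, j) \<in> pairs 24. xor_list (golay_labels ! i) (golay_labels ! j) = u}"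
    by (auto simp: pairs_def golay_label)
  then show "card {(i, j) \<in> pairs 24.
        xor_list (parities golay_checks (golay_col i)) (parities golay_checks (golay_col j)) = u}
      = (if u = replicate (length golay_checks) False then 8 + 20 else 8)"
    using golay_label_histogram[of u] u by (simp add: len)
qed (use assms in \<open>simp add: golay_checks_def\<close>)

section \<open>Disjoint blocks and the main theorem\<close>

text \<open>Seven odd syndromes of zero parity whose column translates are pairwise disjoint.  A
  collision \<open>b\<^sub>p \<oplus> col i = b\<^sub>q \<oplus> col j\<close> would force equal labels at \<open>i\<close> and \<open>j\<close> and
  \<open>b\<^sub>p \<oplus> b\<^sub>q = col i \<oplus> col j\<close>, which evaluation rules out.\<close>

definition translate_bases :: "bool list list" where
  "translate_bases = [
     [False, False, False, True, False, False, False, False, False, False, False, False],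
     [False, False, True, True, True, True, True, False, False, False, False, False],
     [False, False, True, False, False, True, False, False, True, False, False, False],
     [False, False, False, False, True, False, True, False, True, False, False, False],
     [False, False, True, True, False, True, False, False, False, True, False, True],
     [False, False, False, True, True, False, True, False, False, True, False, True],
     [False, False, False, False, False, False, False, False, True, True, False, True]]"

definition base :: "nat \<Rightarrow> nat set" where
  "base p = supp (translate_bases ! p)"

lemma translate_bases_shape:
  "length translate_bases = 7" "distinct translate_bases"
  "\<forall>w \<in> set translate_bases.
     length w = 12 \<and> odd (weight w) \<and> word_parities golay_checks w = replicate 5 False"
  by code_simp+

lemma translate_bases_separated:
  "\<forall>(i, j) \<in> set (pair_list 24). golay_labels ! i = golay_labels ! j \<longrightarrow>
     sorted_wrt (\<lambda>u v. xor_list u v \<noteq> xor_list (golay_cols ! i) (golay_cols ! j)) translate_bases"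
  by code_simp

lemma base_props:
  assumes "p < 7"
  shows "base p \<in> odd_subsets 12" "parities golay_checks (base p) = replicate 5 False"
    "length (translate_bases ! p) = 12"
proof -
  have w: "translate_bases ! p \<in> set translate_bases"
    using assms translate_bases_shape(1) by simp
  then show "base p \<in> odd_subsets 12" "length (translate_bases ! p) = 12"
    using translate_bases_shape(3) supp_subset[of "translate_bases ! p"]
    by (auto simp: base_def odd_subsets_def weight_eq_card_supp)
  show "parities golay_checks (base p) = replicate 5 False"
    using w translate_bases_shape(3) by (simp add: base_def parities_supp golay_checks_def)
qed

lemma translate_label:
  assumes "p < 7" "k < 24"
  shows "parities golay_checks (base p \<oplus> golay_col k) = golay_labels ! k"
proof -
  have "length (golay_labels ! k) = 5"
    using golay_label[OF assms(2)] length_parities[of golay_checks "golay_col k"]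
    by (simp add: golay_checks_def)
  then show ?thesis
    using assms golay.finite_col[of k] base_props(2)[OF assms(1)]
    by (simp add: base_def parities_symdiff golay_label xor_list_def list_eq_iff_nth_eq)
qed

lemma translates_disjoint:
  assumes "p < q" "q < 7"
  shows "golay.translate (base p) \<inter> golay.translate (base q) = {}"
proof (rule ccontr)
  assume "golay.translate (base p) \<inter> golay.translate (base q) \<noteq> {}"
  then obtain i j where ij: "i < 24" "j < 24" "base p \<oplus> golay_col i = base q \<oplus> golay_col j"
    unfolding golay.translate_def by auto
  have labels: "golay_labels ! i = golay_labels ! j"
    using translate_label[of p i] translate_label[of q j] ij assms by simp
  have lengths: "length (translate_bases ! p) = 12" "length (translate_bases ! q) = 12"
    "length (golay_cols ! i) = 12" "length (golay_cols ! j) = 12"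
    using base_props(3) assms ij golay_cols_nth by auto
  have "base p \<oplus> base q = golay_col i \<oplus> golay_col j"
    using ij(3) unfolding symdiff_def set_eq_iff by blast
  then have collision: "xor_list (translate_bases ! p) (translate_bases ! q)
      = xor_list (golay_cols ! i) (golay_cols ! j)"
    using lengths by (intro supp_inject) (simp_all add: supp_xor_list base_def golay_col_def)
  have "translate_bases ! p \<noteq> translate_bases ! q"
    using translate_bases_shape(1,2) assms by (simp add: nth_eq_iff_index_eq)
  then have "i \<noteq> j"
    using collision lengths by (auto simp: xor_list_def list_eq_iff_nth_eq)
  define i' j' where "i' = min i j" and "j' = max i j"
  have pair: "(i', j') \<in> set (pair_list 24)"
    using \<open>i \<noteq> j\<close> ij by (auto simp: set_pair_list pairs_def i'_def j'_def)
  have "golay_labels ! i' = golay_labels ! j'"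
    "xor_list (golay_cols ! i') (golay_cols ! j') = xor_list (golay_cols ! i) (golay_cols ! j)"
    using labels by (auto simp: i'_def j'_def min_def max_def xor_list_commute)
  then have "xor_list (translate_bases ! p) (translate_bases ! q) \<noteq> xor_list (golay_cols ! i) (golay_cols ! j)"
    using translate_bases_separated pair assms translate_bases_shape(1)
    by (force simp: sorted_wrt_iff_nth_less)
  then show False
    using collision by simp
qed

text \<open>The sixteen parity classes used as blocks: the fifteen labels that no column carries, whose
  classes avoid every translate, and the zero label.\<close>

definition unused_labels :: "bool list list" where
  "unused_labels = filter (\<lambda>u. u \<notin> set golay_labels) (List.n_lists 5 [False, True])"

definition class_labels :: "bool list list" where
  "class_labels = unused_labels @ [replicate 5 False]"

lemma class_labels_shape:
  "length unused_labels = 15" "distinct class_labels" "\<forall>u \<in> set class_labels. length u = 5"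
  by code_simp+

lemma translate_class_disjoint:
  assumes "p < 7" "q < 15"
  shows "golay.translate (base p) \<inter> golay_class (class_labels ! q) = {}"
proof -
  have "class_labels ! q \<notin> set golay_labels"
    using assms class_labels_shape(1) nth_mem[of q unused_labels]
    by (auto simp: class_labels_def nth_append unused_labels_def)
  moreover have "length golay_labels = 24"
    by (simp add: golay_labels_def)
  then have "parities golay_checks (base p \<oplus> golay_col k) \<in> set golay_labels" if "k < 24" for k
    using translate_label[OF assms(1) that] that by simp
  ultimately show ?thesis
    unfolding golay.translate_def golay_class_def by force
qed

definition translate_union :: "nat \<Rightarrow> nat set set" where
  "translate_union a = (\<Union>p<a. golay.translate (base p))"

definition class_union :: "nat \<Rightarrow> nat set set" where
  "class_union b = (\<Union>q<b. golay_class (class_labels ! q))"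

lemma translate_union_equitable: "a \<le> 7 \<Longrightarrow> golay.equitable (3 * a) 20 (translate_union a)"
proof (induction a)
  case 0
  then show ?case
    by (simp add: translate_union_def golay.equitable_empty)
next
  case (Suc a)
  have "translate_union (Suc a) = translate_union a \<union> golay.translate (base a)"
    by (auto simp: translate_union_def lessThan_Suc)
  moreover have "translate_union a \<inter> golay.translate (base a) = {}"
    using translates_disjoint Suc.prems by (fastforce simp: translate_union_def)
  moreover have "golay.equitable 3 20 (golay.translate (base a))"
    using golay_translate_equitable base_props(1) Suc.prems by simp
  ultimately show ?case
    using golay.equitable_Un[OF Suc.IH] Suc.prems by (simp add: add.commute)
qed

lemma translate_union_class_disjoint:
  assumes "a \<le> 7" "b < 15"
  shows "translate_union a \<inter> golay_class (class_labels ! b) = {}"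
proof -
  have "golay.translate (base p) \<inter> golay_class (class_labels ! b) = {}" if "p < a" for p
    using translate_class_disjoint[of p b] that assms by simp
  then show ?thesis
    unfolding translate_union_def by blast
qed

lemma class_union_disjoint:
  assumes "b < 16"
  shows "class_union b \<inter> golay_class (class_labels ! b) = {}"
proof -
  have "length class_labels = 16"
    using class_labels_shape(1) by (simp add: class_labels_def)
  then show ?thesis
    using class_labels_shape(2) assms
    by (auto simp: class_union_def golay_class_def nth_eq_iff_index_eq)
qed

lemma union_equitable:
  assumes "a \<le> 7" "b \<le> 16" "a = 0 \<or> b \<le> 15"
  shows "golay.equitable (3 * a + 8 * b) 20 (translate_union a \<union> class_union b)"
  using assms
proof (induction b)
  case 0
  then show ?case
    using translate_union_equitable by (simp add: class_union_def)
next
  case (Suc b)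
  let ?class = "golay_class (class_labels ! b)"
  have split: "translate_union a \<union> class_union (Suc b) = (translate_union a \<union> class_union b) \<union> ?class"
    by (auto simp: class_union_def lessThan_Suc)
  have "translate_union a \<inter> ?class = {}"
    using translate_union_class_disjoint[of a b] Suc.prems by (cases "a = 0") (auto simp: translate_union_def)
  then have disjoint: "(translate_union a \<union> class_union b) \<inter> ?class = {}"
    using class_union_disjoint[of b] Suc.prems by auto
  have "length class_labels = 16"
    using class_labels_shape(1) by (simp add: class_labels_def)
  then have class_equitable: "golay.equitable 8 20 ?class"
    using class_labels_shape(3) nth_mem[of b class_labels] Suc.prems
    by (intro golay_class_equitable) simp
  have IH: "golay.equitable (3 * a + 8 * b) 20 (translate_union a \<union> class_union b)"
    using Suc.IH Suc.prems by simp
  have "golay.equitable (3 * a + 8 * b + 8) 20 ((translate_union a \<union> class_union b) \<union> ?class)"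
    using golay.equitable_Un[OF IH class_equitable disjoint] .
  moreover have "3 * a + 8 * Suc b = 3 * a + 8 * b + 8"
    by simp
  ultimately show ?case
    by (simp only: split)
qed

lemma three_eight_decomposition:
  fixes c :: nat
  assumes "c \<in> {3, 6, 8, 9, 11, 12} \<union> {14..128}"
  shows "\<exists>a b. a \<le> 7 \<and> b \<le> 16 \<and> (a = 0 \<or> b \<le> 15) \<and> c = 3 * a + 8 * b"
proof -
  consider "c \<in> {3, 6, 8, 9, 11, 12}" | "14 \<le> c \<and> c \<le> 128"
    using assms by auto
  then show ?thesis
  proof cases
    case 1
    then show ?thesis
      by auto presburger+
  next
    case 2
    then show ?thesis
      by presburger
  qed
qed

lemma card_pairs_24: "card (pairs 24) = 276"
proof -
  have "length (pair_list 24) = 276"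
    by code_simp
  then show ?thesis
    using card_pairs_filter[of 24 "\<lambda>_. True"] by simp
qed

theorem theorem1:
  fixes c :: nat
  assumes "c \<in> {3, 6, 8, 9, 11, 12} \<union> {14..128}"
  shows "\<exists>C. perfect_coloring_params (halved_cube_vertices 24) halved_cube_adj C
                (20 + c) (256 - c) c (276 - c)"
proof -
  obtain a b where ab: "a \<le> 7" "b \<le> 16" "a = 0 \<or> b \<le> 15" "c = 3 * a + 8 * b"
    using three_eight_decomposition[OF assms] by blast
  then have "golay.equitable c 20 (translate_union a \<union> class_union b)"
    using union_equitable by simp
  moreover have "0 < c" "c + 20 < card (pairs 24)"
    using assms by (auto simp: card_pairs_24)
  ultimately show ?thesis
    using golay.equitable_perfect by (fastforce simp: card_pairs_24 add.commute)
qed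

end
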